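(* Let $(Z,M,\mu)$ be a measure space with a non-trivial atomless measure $\mu$, and let $1 < a < b \le 2$. Let $\psi:(a,b)\to(0,\infty]$ be a generating function with $\inf_{p\in(a,b)}\psi(p)>0$, and let $G\psi = G\psi[a,b]$ be the associated Grand Lebesgue Space with norm $\|f\|G\psi = \sup_{p\in(a,b)} \|f\|_p/\psi(p)$. For $u\in G\psi$ put $$\kappa[G\psi[a,b]](u) := \inf_{p\in(a,b)} \frac{\|u\|_p^2}{\psi^2(p)}.$$ Then for all $x,y$ in the closed unit ball $B[G\psi[a,b]] = \{f\in G\psi: \|f\|G\psi\le 1\}$, $$\|x+y\|G\psi \le 2 - \frac{a-1}{4}\,\kappa[G\psi[a,b]](x-y).$$
   Context: For a measurable $f:Z\to\mathbb{R}$ and $1\le p<\infty$, $\|f\|_p = \left(\int_Z |f(z)|^p\,\mu(dz)\right)^{1/p}$. Given $1\le a<b\le\infty$ and a function $\psi:(a,b)\to(0,\infty]$ (possibly infinite at some points) with $\inf_{p\in(a,b)}\psi(p)>0$, the Grand Lebesgue Space $G\psi[a,b]$ consists of all real measurable functions $f$ on $Z$ with finite norm $\|f\|G\psi[a,b] := \sup_{p\in(a,b)} \|f\|_p/\psi(p)$, using the convention $C/\infty := 0$. *)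

theory Defs
  imports "HOL-Analysis.Analysis"
begin

definition Lp_norm :: "'a measure \<Rightarrow> real \<Rightarrow> ('a \<Rightarrow> real) \<Rightarrow> ennreal" where
  "Lp_norm M p f =
     (let I = (\<integral>\<^sup>+ z. ennreal (\<bar>f z\<bar> powr p) \<partial>M)
      in if I = \<infinity> then \<infinity> else ennreal ((enn2real I) powr (1 / p)))"

text \<open>Grand Lebesgue norm; ennreal division gives C / \<infinity> = 0.\<close>
definition GLS_norm :: "'a measure \<Rightarrow> real \<Rightarrow> real \<Rightarrow> (real \<Rightarrow> ennreal) \<Rightarrow> ('a \<Rightarrow> real) \<Rightarrow> ennreal" where
  "GLS_norm M a b \<psi> f = (SUP p\<in>{a<..<b}. Lp_norm M p f / \<psi> p)"

definition GLS :: "'a measure \<Rightarrow> real \<Rightarrow> real \<Rightarrow> (real \<Rightarrow> ennreal) \<Rightarrow> ('a \<Rightarrow> real) set" where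
  "GLS M a b \<psi> = {f. f \<in> borel_measurable M \<and> GLS_norm M a b \<psi> f < \<infinity>}"

definition GLS_kappa :: "'a measure \<Rightarrow> real \<Rightarrow> real \<Rightarrow> (real \<Rightarrow> ennreal) \<Rightarrow> ('a \<Rightarrow> real) \<Rightarrow> ennreal" where
  "GLS_kappa M a b \<psi> u = (INF p\<in>{a<..<b}. (Lp_norm M p u)\<^sup>2 / (\<psi> p)\<^sup>2)"

definition atomless :: "'a measure \<Rightarrow> bool" where
  "atomless M \<longleftrightarrow> (\<forall>A\<in>sets M. 0 < emeasure M A \<longrightarrow>
      (\<exists>B\<in>sets M. B \<subseteq> A \<and> 0 < emeasure M B \<and> emeasure M B < emeasure M A))"

end

theory Submission
  imports Defs
begin

text \<open>
  Fix \<open>p \<in> (a, b)\<close>, so \<open>1 < p \<le> 2\<close>. The two-point inequality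
  \<open>2 (f\<^sup>2 + (p - 1) g\<^sup>2)\<^bsup>p/2\<^esup> \<le> \<bar>f + g\<bar>\<^sup>p + \<bar>f - g\<bar>\<^sup>p\<close>, a one-variable calculus fact
  after normalising to \<open>\<bar>g\<bar> \<le> \<bar>f\<bar> = 1\<close>, applied pointwise to \<open>f = x + y\<close>, \<open>g = x - y\<close> and
  integrated, bounds \<open>\<integral> ((x + y)\<^sup>2 + (p - 1) (x - y)\<^sup>2)\<^bsup>p/2\<^esup>\<close> by
  \<open>2\<^bsup>p-1\<^esup> (\<parallel>x\<parallel>\<^sub>p\<^sup>p + \<parallel>y\<parallel>\<^sub>p\<^sup>p) \<le> (2 \<psi> p)\<^sup>p\<close>. As \<open>p / 2 \<le> 1\<close>, the reverse Minkowski
  inequality in \<open>L\<^bsup>p/2\<^esup>\<close> bounds that integral from below by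
  \<open>(\<parallel>x + y\<parallel>\<^sub>p\<^sup>2 + (p - 1) \<parallel>x - y\<parallel>\<^sub>p\<^sup>2)\<^bsup>p/2\<^esup>\<close>; hence
  \<open>\<parallel>x + y\<parallel>\<^sub>p\<^sup>2 + (p - 1) \<parallel>x - y\<parallel>\<^sub>p\<^sup>2 \<le> 4 (\<psi> p)\<^sup>2\<close>. With \<open>\<surd>(1 - t) \<le> 1 - t / 2\<close> this gives
  \<open>\<parallel>x + y\<parallel>\<^sub>p / \<psi> p + (p - 1) / 4 \<cdot> \<parallel>x - y\<parallel>\<^sub>p\<^sup>2 / (\<psi> p)\<^sup>2 \<le> 2\<close>, and \<open>a - 1 \<le> p - 1\<close>
  together with the definition of \<open>\<kappa>\<close> finishes the proof after taking the supremum over \<open>p\<close>.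
\<close>

lemma powr_le_Bernoulli:
  fixes r x :: real
  assumes "0 \<le> r" "r \<le> 1" "-1 \<le> x"
  shows "(1 + x) powr r \<le> 1 + r * x"
proof (cases "x = -1")
  case False
  then have "(1 + x) powr r * 1 powr (1 - r) \<le> r * (1 + x) + (1 - r) * 1"
    using assms by (intro Youngs_inequality_0) auto
  then show ?thesis by (simp add: algebra_simps)
qed (use assms in simp)

lemma Bernoulli_le_powr_neg:
  fixes k x :: real
  assumes "-1 \<le> k" "k \<le> 0" "-1 < x"
  shows "1 + k * x \<le> (1 + x) powr k"
proof -
  have upper: "(1 + x) powr (-k) \<le> 1 - k * x"
    using powr_le_Bernoulli[of "-k" x] assms by simp
  have pos: "0 < (1 + x) powr (-k)" using assms by simp
  have denom: "0 < 1 - k * x" using pos upper by linarith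
  have "(1 + k * x) * (1 - k * x) = 1 - (k * x)\<^sup>2" by (simp add: power2_eq_square algebra_simps)
  then have "(1 + k * x) * (1 - k * x) \<le> 1" by simp
  then have "1 + k * x \<le> 1 / (1 - k * x)"
    using denom by (simp add: le_divide_eq)
  also have "\<dots> \<le> 1 / (1 + x) powr (-k)"
    using pos upper denom by (intro divide_left_mono) auto
  also have "\<dots> = (1 + x) powr k"
    using assms by (simp add: powr_minus_divide)
  finally show ?thesis .
qed

lemma linear_le_powr_diff:
  fixes q s :: real
  assumes q: "0 \<le> q" "q \<le> 1" and s: "0 \<le> s" "s < 1"
  shows "2 * q * s \<le> (1 + s) powr q - (1 - s) powr q"
proof -
  define h where "h u = (1 + u) powr q - (1 - u) powr q - 2 * q * u" for u :: real
  have "h 0 \<le> h s"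
  proof (rule DERIV_nonneg_imp_nondecreasing[OF s(1)])
    fix u assume u: "0 \<le> u" "u \<le> s"
    have "2 \<le> (1 + u) powr (q - 1) + (1 - u) powr (q - 1)"
      using Bernoulli_le_powr_neg[of "q - 1" u] Bernoulli_le_powr_neg[of "q - 1" "- u"] q u s
      by simp
    then have "0 \<le> q * ((1 + u) powr (q - 1) + (1 - u) powr (q - 1) - 2)"
      using q by simp
    moreover have "(h has_real_derivative q * ((1 + u) powr (q - 1) + (1 - u) powr (q - 1) - 2)) (at u)"
      unfolding h_def by (intro derivative_eq_intros, (use u s in simp_all), simp_all add: algebra_simps)
    ultimately show "\<exists>d. (h has_real_derivative d) (at u) \<and> 0 \<le> d" by blast
  qed
  then show ?thesis by (simp add: h_def)
qed

lemma quadratic_le_powr_sum: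
  fixes p t :: real
  assumes p: "1 \<le> p" "p \<le> 2" and t: "0 \<le> t" "t \<le> 1"
  shows "2 + p * (p - 1) * t\<^sup>2 \<le> (1 + t) powr p + (1 - t) powr p"
proof -
  define h where "h u = (1 + u) powr p + (1 - u) powr p - p * (p - 1) * u\<^sup>2" for u :: real
  have "h 0 \<le> h t"
  proof (rule DERIV_nonneg_imp_increasing_open[OF t(1)])
    fix u assume u: "0 < u" "u < t"
    have "(h has_real_derivative p * ((1 + u) powr (p - 1) - (1 - u) powr (p - 1) - 2 * (p - 1) * u)) (at u)"
      unfolding h_def by (intro derivative_eq_intros, (use u t in simp_all), simp_all add: algebra_simps)
    moreover have "0 \<le> p * ((1 + u) powr (p - 1) - (1 - u) powr (p - 1) - 2 * (p - 1) * u)"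
      using linear_le_powr_diff[of "p - 1" u] p u t by simp
    ultimately show "\<exists>d. (h has_real_derivative d) (at u) \<and> 0 \<le> d" by blast
  next
    show "continuous_on {0..t} h"
      unfolding h_def using p t by (intro continuous_intros continuous_on_powr') auto
  qed
  then show ?thesis by (simp add: h_def)
qed

lemma square_powr_half:
  fixes x p :: real
  shows "(x\<^sup>2) powr (p / 2) = \<bar>x\<bar> powr p"
proof (cases "x = 0")
  case False
  then have "x\<^sup>2 = \<bar>x\<bar> powr 2" by simp
  then have "(x\<^sup>2) powr (p / 2) = \<bar>x\<bar> powr (2 * (p / 2))" by (simp only: powr_powr)
  then show ?thesis by simp
qed simp

lemma two_point_inequality_normalized:
  fixes p t :: real
  assumes p: "1 \<le> p" "p \<le> 2" and t: "\<bar>t\<bar> \<le> 1"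
  shows "2 * (1 + (p - 1) * t\<^sup>2) powr (p / 2) \<le> (1 + t) powr p + (1 - t) powr p"
proof -
  have "0 \<le> (p - 1) * t\<^sup>2" using p by simp
  then have "(1 + (p - 1) * t\<^sup>2) powr (p / 2) \<le> 1 + p / 2 * ((p - 1) * t\<^sup>2)"
    by (intro powr_le_Bernoulli) (use p in linarith)+
  moreover have "2 + p * (p - 1) * \<bar>t\<bar>\<^sup>2 \<le> (1 + \<bar>t\<bar>) powr p + (1 - \<bar>t\<bar>) powr p"
    using p t by (intro quadratic_le_powr_sum) auto
  moreover have "(1 + \<bar>t\<bar>) powr p + (1 - \<bar>t\<bar>) powr p = (1 + t) powr p + (1 - t) powr p"
    by (cases "0 \<le> t") auto
  ultimately show ?thesis by (simp add: algebra_simps)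
qed

lemma two_point_inequality_ordered:
  fixes p f g :: real
  assumes p: "1 \<le> p" "p \<le> 2" and fg: "\<bar>g\<bar> \<le> \<bar>f\<bar>"
  shows "2 * (f\<^sup>2 + (p - 1) * g\<^sup>2) powr (p / 2) \<le> \<bar>f + g\<bar> powr p + \<bar>f - g\<bar> powr p"
proof (cases "f = 0")
  case False
  define t where "t = g / f"
  have t: "\<bar>t\<bar> \<le> 1" using fg False by (simp add: t_def divide_le_eq)
  have g: "g = f * t" using False by (simp add: t_def)
  have "(f\<^sup>2 + (p - 1) * g\<^sup>2) powr (p / 2) = (f\<^sup>2) powr (p / 2) * (1 + (p - 1) * t\<^sup>2) powr (p / 2)"
    using p by (simp add: g algebra_simps flip: powr_mult)
  also have "(f\<^sup>2) powr (p / 2) = \<bar>f\<bar> powr p"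
    by (rule square_powr_half)
  finally have lhs: "(f\<^sup>2 + (p - 1) * g\<^sup>2) powr (p / 2) = \<bar>f\<bar> powr p * (1 + (p - 1) * t\<^sup>2) powr (p / 2)" .
  have "f + g = f * (1 + t)" "f - g = f * (1 - t)" "0 \<le> 1 + t" "0 \<le> 1 - t"
    using t by (auto simp: g algebra_simps)
  then have "\<bar>f + g\<bar> powr p = \<bar>f\<bar> powr p * (1 + t) powr p" "\<bar>f - g\<bar> powr p = \<bar>f\<bar> powr p * (1 - t) powr p"
    by (simp_all add: abs_mult powr_mult)
  moreover have "\<bar>f\<bar> powr p * (2 * (1 + (p - 1) * t\<^sup>2) powr (p / 2))
      \<le> \<bar>f\<bar> powr p * ((1 + t) powr p + (1 - t) powr p)"
    using two_point_inequality_normalized[OF p t] by (intro mult_left_mono) auto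
  ultimately show ?thesis by (simp add: lhs distrib_left mult.left_commute)
qed (use fg in simp)

lemma two_point_inequality:
  fixes p f g :: real
  assumes p: "1 \<le> p" "p \<le> 2"
  shows "2 * (f\<^sup>2 + (p - 1) * g\<^sup>2) powr (p / 2) \<le> \<bar>f + g\<bar> powr p + \<bar>f - g\<bar> powr p"
proof (cases "\<bar>g\<bar> \<le> \<bar>f\<bar>")
  case True
  then show ?thesis using two_point_inequality_ordered[OF p] by blast
next
  case False
  \<comment> \<open>as \<open>p - 1 \<le> 1\<close>, putting the weight \<open>p - 1\<close> on the smaller coordinate only enlarges the left side\<close>
  have "f\<^sup>2 + (p - 1) * g\<^sup>2 \<le> g\<^sup>2 + (p - 1) * f\<^sup>2"
  proof -
    have "f\<^sup>2 \<le> g\<^sup>2" using False by (simp add: abs_le_square_iff)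
    then have "0 \<le> (2 - p) * (g\<^sup>2 - f\<^sup>2)" using p by simp
    then show ?thesis by (simp add: algebra_simps)
  qed
  then have "2 * (f\<^sup>2 + (p - 1) * g\<^sup>2) powr (p / 2) \<le> 2 * (g\<^sup>2 + (p - 1) * f\<^sup>2) powr (p / 2)"
    using p by (simp add: powr_mono2)
  also have "\<dots> \<le> \<bar>g + f\<bar> powr p + \<bar>g - f\<bar> powr p"
    using False p by (intro two_point_inequality_ordered) auto
  finally show ?thesis by (simp add: add.commute abs_minus_commute)
qed

lemma weighted_powr_sum_le:
  fixes l r F G :: real
  assumes l: "0 \<le> l" "l \<le> 1" and r: "0 \<le> r" "r \<le> 1" and FG: "0 \<le> F" "0 \<le> G"
  shows "l powr (1 - r) * F powr r + (1 - l) powr (1 - r) * G powr r \<le> (F + G) powr r"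
proof (cases "F + G = 0")
  case False
  define S where "S = F + G"
  have S: "0 < S" using False FG by (simp add: S_def)
  have Young: "c powr (1 - r) * X powr r \<le> S powr r * ((1 - r) * c + r * (X / S))"
    if "0 \<le> c" "0 \<le> X" for c X :: real
  proof (cases "c = 0 \<or> X = 0")
    case False
    then have weighted: "(X / S) powr r * c powr (1 - r) \<le> r * (X / S) + (1 - r) * c"
      using that r S by (intro Youngs_inequality_0) auto
    have "S powr r * ((X / S) powr r * c powr (1 - r)) \<le> S powr r * ((1 - r) * c + r * (X / S))"
      using mult_left_mono[OF weighted, of "S powr r"] by (simp add: add.commute)
    then show ?thesis
      using that S by (simp add: powr_divide mult.commute)
  qed (use that r S in auto)
  have "l powr (1 - r) * F powr r + (1 - l) powr (1 - r) * G powr r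
      \<le> S powr r * ((1 - r) * l + r * (F / S)) + S powr r * ((1 - r) * (1 - l) + r * (G / S))"
    using Young[of l F] Young[of "1 - l" G] l FG by linarith
  also have "\<dots> = S powr r * ((1 - r) + r * ((F + G) / S))"
    by (simp add: algebra_simps add_divide_distrib)
  also have "\<dots> = S powr r" using S by (simp add: S_def)
  finally show ?thesis by (simp add: S_def)
qed (use FG in \<open>simp add: add_nonneg_eq_0_iff\<close>)

lemma weighted_powr_sum_eq:
  fixes r F G :: real
  assumes FG: "0 \<le> F" "0 \<le> G" "0 < F + G"
  defines "l \<equiv> F / (F + G)"
  shows "l powr (1 - r) * F powr r + (1 - l) powr (1 - r) * G powr r = (F + G) powr r"
proof -
  have self: "X powr (1 - r) * X powr r = X" if "0 \<le> X" for X :: real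
    using that by (simp flip: powr_add)
  have "1 - l = G / (F + G)" using FG by (simp add: l_def field_simps)
  then have "l powr (1 - r) * F powr r + (1 - l) powr (1 - r) * G powr r
      = (F + G) / (F + G) powr (1 - r)"
    using FG by (simp add: l_def powr_divide self add_divide_distrib)
  also have "\<dots> = (F + G) powr r"
    using FG by (simp add: powr_diff)
  finally show ?thesis .
qed

lemma sum_roots_le_of_weighted_bound:
  fixes r U V S :: real
  assumes r: "0 < r" and nonneg: "0 \<le> U" "0 \<le> V" "0 \<le> S"
    and bound: "\<And>l. 0 \<le> l \<Longrightarrow> l \<le> 1 \<Longrightarrow> l powr (1 - r) * U + (1 - l) powr (1 - r) * V \<le> S"
  shows "U powr (1 / r) + V powr (1 / r) \<le> S powr (1 / r)"
proof -
  define a b where "a = U powr (1 / r)" and "b = V powr (1 / r)"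
  have ab: "0 \<le> a" "0 \<le> b" "a powr r = U" "b powr r = V"
    using nonneg r by (simp_all add: a_def b_def powr_powr)
  have "a + b \<le> S powr (1 / r)"
  proof (cases "a + b = 0")
    case False
    then have "0 < a + b" using ab by simp
    then have "(a + b) powr r \<le> S"
      using bound[of "a / (a + b)"] weighted_powr_sum_eq[of a b r] ab by simp
    then have "((a + b) powr r) powr (1 / r) \<le> S powr (1 / r)"
      using r ab by (intro powr_mono2) auto
    then show ?thesis using r ab by (simp add: powr_powr)
  qed (use nonneg in simp)
  then show ?thesis by (simp add: a_def b_def)
qed

lemma sum_squares_bound_imp_linear_bound:
  fixes \<alpha> \<beta> c q :: real
  assumes "0 < q" "\<alpha>\<^sup>2 + c * \<beta>\<^sup>2 \<le> 4 * q\<^sup>2"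
  shows "\<alpha> / q + c / 4 * (\<beta>\<^sup>2 / q\<^sup>2) \<le> 2"
proof -
  have "4 * \<alpha> * q + c * \<beta>\<^sup>2 \<le> 8 * q\<^sup>2 - (2 * q - \<alpha>)\<^sup>2"
    using assms by (simp add: power2_eq_square algebra_simps)
  then have "4 * \<alpha> * q + c * \<beta>\<^sup>2 \<le> 8 * q\<^sup>2" by (smt (verit) zero_le_power2)
  then show ?thesis using assms by (simp add: field_simps power2_eq_square)
qed

lemma le_ennrealE:
  fixes I :: ennreal
  assumes "I \<le> ennreal S" "0 \<le> S"
  obtains X where "I = ennreal X" "0 \<le> X" "X \<le> S"
  using assms by (cases I) (auto simp: ennreal_le_iff2 top_unique)

lemma ennreal_le_of_divide_le_1:
  fixes a b :: ennreal
  assumes "a / b \<le> 1" "0 < b"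
  shows "a \<le> b"
  using assms
  by (cases a; cases b)
     (auto simp: divide_ennreal ennreal_divide_eq_top_iff ennreal_top_divide top_unique
        simp flip: ennreal_1 split: if_splits)

lemma ennreal_sum_squares_bound_imp_linear_bound:
  fixes A B P :: ennreal and c :: real
  assumes c: "0 < c" and P: "0 < P" and bound: "A\<^sup>2 + ennreal c * B\<^sup>2 \<le> (2 * P)\<^sup>2"
  shows "A / P + ennreal (c / 4) * (B\<^sup>2 / P\<^sup>2) \<le> 2"
proof (cases P rule: ennreal_cases)
  case (real q)
  then have q: "0 < q" using P by simp
  have "(2 * P)\<^sup>2 < \<infinity>"
    using real by (simp add: power_less_top_ennreal ennreal_mult_less_top)
  then have "A\<^sup>2 + ennreal c * B\<^sup>2 < \<infinity>"
    using bound by (rule le_less_trans[rotated])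
  then obtain \<alpha> \<beta> where \<alpha>: "A = ennreal \<alpha>" "0 \<le> \<alpha>" and \<beta>: "B = ennreal \<beta>" "0 \<le> \<beta>"
    using c by (cases A; cases B) (auto simp: ennreal_mult_top)
  have "\<alpha>\<^sup>2 + c * \<beta>\<^sup>2 \<le> 4 * q\<^sup>2"
    using bound \<alpha> \<beta> c q real
    by (simp add: ennreal_power power_mult_distrib flip: ennreal_mult ennreal_plus ennreal_numeral)
  then have "\<alpha> / q + c / 4 * (\<beta>\<^sup>2 / q\<^sup>2) \<le> 2"
    using q by (rule sum_squares_bound_imp_linear_bound[rotated])
  then show ?thesis
    using \<alpha> \<beta> c q real
    by (simp add: divide_ennreal ennreal_power del: ennreal_plus
        flip: ennreal_mult ennreal_plus ennreal_numeral)
qed simp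

lemma Lp_norm_eq_ennreal:
  assumes "(\<integral>\<^sup>+ z. ennreal (\<bar>f z\<bar> powr p) \<partial>M) = ennreal X" "0 \<le> X"
  shows "Lp_norm M p f = ennreal (X powr (1 / p))"
  using assms by (simp add: Lp_norm_def)

lemma Lp_norm_eq_top:
  assumes "(\<integral>\<^sup>+ z. ennreal (\<bar>f z\<bar> powr p) \<partial>M) = \<infinity>"
  shows "Lp_norm M p f = \<infinity>"
  using assms by (simp add: Lp_norm_def)

lemma Lp_norm_le_ennreal_iff:
  assumes "0 < p" "0 \<le> Q"
  shows "Lp_norm M p f \<le> ennreal Q \<longleftrightarrow> (\<integral>\<^sup>+ z. ennreal (\<bar>f z\<bar> powr p) \<partial>M) \<le> ennreal (Q powr p)"
proof (cases "\<integral>\<^sup>+ z. ennreal (\<bar>f z\<bar> powr p) \<partial>M" rule: ennreal_cases)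
  case (real X)
  have "X powr (1 / p) \<le> Q \<longleftrightarrow> X \<le> Q powr p"
  proof
    assume "X powr (1 / p) \<le> Q"
    then show "X \<le> Q powr p"
      using powr_mono2[of p "X powr (1 / p)" Q] real assms by (simp add: powr_powr)
  next
    assume "X \<le> Q powr p"
    then show "X powr (1 / p) \<le> Q"
      using powr_mono2[of "1 / p" X "Q powr p"] real assms by (simp add: powr_powr)
  qed
  then show ?thesis
    using real assms by (simp add: Lp_norm_eq_ennreal)
qed (simp add: Lp_norm_eq_top top_unique)

lemma Lp_norm_square:
  "Lp_norm M (p / 2) (\<lambda>z. (f z)\<^sup>2) = (Lp_norm M p f)\<^sup>2"
proof (cases "\<integral>\<^sup>+ z. ennreal (\<bar>f z\<bar> powr p) \<partial>M" rule: ennreal_cases)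
  case (real X)
  then have "(\<integral>\<^sup>+ z. ennreal (\<bar>(f z)\<^sup>2\<bar> powr (p / 2)) \<partial>M) = ennreal X"
    by (simp add: square_powr_half)
  moreover have "X powr (1 / (p / 2)) = (X powr (1 / p))\<^sup>2"
    using real by (simp add: power2_eq_square flip: powr_add)
  ultimately show ?thesis
    using real by (simp add: Lp_norm_eq_ennreal ennreal_power)
qed (simp add: Lp_norm_eq_top square_powr_half)

lemma Lp_norm_cmult:
  assumes "0 < p" "f \<in> borel_measurable M"
  shows "Lp_norm M p (\<lambda>z. c * f z) = ennreal \<bar>c\<bar> * Lp_norm M p f"
proof (cases "c = 0")
  case True
  then show ?thesis by (simp add: Lp_norm_def)
next
  case False
  have "(\<integral>\<^sup>+ z. ennreal (\<bar>c * f z\<bar> powr p) \<partial>M)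
      = ennreal (\<bar>c\<bar> powr p) * (\<integral>\<^sup>+ z. ennreal (\<bar>f z\<bar> powr p) \<partial>M)"
    using assms by (simp add: abs_mult powr_mult ennreal_mult nn_integral_cmult)
  then show ?thesis
    using False assms
    by (cases "\<integral>\<^sup>+ z. ennreal (\<bar>f z\<bar> powr p) \<partial>M" rule: ennreal_cases)
       (simp_all add: Lp_norm_eq_ennreal Lp_norm_eq_top powr_mult powr_powr ennreal_mult
          ennreal_mult_top flip: ennreal_mult)
qed

lemma Lp_norm_reverse_triangle:
  assumes r: "0 < r" "r \<le> 1"
    and meas: "F \<in> borel_measurable M" "G \<in> borel_measurable M"
    and nonneg: "\<And>z. z \<in> space M \<Longrightarrow> 0 \<le> F z" "\<And>z. z \<in> space M \<Longrightarrow> 0 \<le> G z"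
  shows "Lp_norm M r F + Lp_norm M r G \<le> Lp_norm M r (\<lambda>z. F z + G z)"
proof (cases "(\<integral>\<^sup>+ z. ennreal (\<bar>F z + G z\<bar> powr r) \<partial>M) = \<infinity>")
  case True
  then show ?thesis by (simp add: Lp_norm_eq_top)
next
  case False
  then obtain S where S: "(\<integral>\<^sup>+ z. ennreal (\<bar>F z + G z\<bar> powr r) \<partial>M) = ennreal S" "0 \<le> S"
    by (cases rule: ennreal_cases) auto
  have le_S: "(\<integral>\<^sup>+ z. ennreal (\<bar>H z\<bar> powr r) \<partial>M) \<le> ennreal S"
    if "H = F \<or> H = G" for H
    unfolding S(1)[symmetric] using that nonneg r
    by (intro nn_integral_mono ennreal_leI powr_mono2) auto
  obtain SF where SF: "(\<integral>\<^sup>+ z. ennreal (\<bar>F z\<bar> powr r) \<partial>M) = ennreal SF" "0 \<le> SF"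
    using le_S[of F] S(2) le_ennrealE by blast
  obtain SG where SG: "(\<integral>\<^sup>+ z. ennreal (\<bar>G z\<bar> powr r) \<partial>M) = ennreal SG" "0 \<le> SG"
    using le_S[of G] S(2) le_ennrealE by blast
  have split: "l powr (1 - r) * SF + (1 - l) powr (1 - r) * SG \<le> S" if "0 \<le> l" "l \<le> 1" for l
  proof -
    have "ennreal (l powr (1 - r) * SF + (1 - l) powr (1 - r) * SG)
        = (\<integral>\<^sup>+ z. ennreal (l powr (1 - r)) * ennreal (\<bar>F z\<bar> powr r)
                 + ennreal ((1 - l) powr (1 - r)) * ennreal (\<bar>G z\<bar> powr r) \<partial>M)"
      using meas SF SG by (simp add: nn_integral_add nn_integral_cmult ennreal_mult)
    also have "\<dots> = (\<integral>\<^sup>+ z. ennreal (l powr (1 - r) * F z powr r + (1 - l) powr (1 - r) * G z powr r) \<partial>M)"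
      using nonneg by (intro nn_integral_cong) (simp add: ennreal_mult)
    also have "\<dots> \<le> ennreal S"
      unfolding S(1)[symmetric] using that r nonneg
      by (intro nn_integral_mono ennreal_leI) (simp add: weighted_powr_sum_le)
    finally show ?thesis using S by simp
  qed
  have "SF powr (1 / r) + SG powr (1 / r) \<le> S powr (1 / r)"
    using r(1) SF(2) SG(2) S(2) split by (rule sum_roots_le_of_weighted_bound)
  then show ?thesis
    using SF SG S by (simp add: Lp_norm_eq_ennreal flip: ennreal_plus)
qed

lemma Lp_norm_uniform_convexity:
  assumes p: "1 \<le> p" "p \<le> 2"
    and meas: "x \<in> borel_measurable M" "y \<in> borel_measurable M"
    and bounded: "Lp_norm M p x \<le> P" "Lp_norm M p y \<le> P"
  shows "(Lp_norm M p (\<lambda>z. x z + y z))\<^sup>2 + ennreal (p - 1) * (Lp_norm M p (\<lambda>z. x z - y z))\<^sup>2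
           \<le> (2 * P)\<^sup>2"
proof (cases P rule: ennreal_cases)
  case (real Q)
  obtain X where X: "(\<integral>\<^sup>+ z. ennreal (\<bar>x z\<bar> powr p) \<partial>M) = ennreal X" "0 \<le> X" "X \<le> Q powr p"
    using bounded(1) real p by (auto simp: Lp_norm_le_ennreal_iff elim: le_ennrealE)
  obtain Y where Y: "(\<integral>\<^sup>+ z. ennreal (\<bar>y z\<bar> powr p) \<partial>M) = ennreal Y" "0 \<le> Y" "Y \<le> Q powr p"
    using bounded(2) real p by (auto simp: Lp_norm_le_ennreal_iff elim: le_ennrealE)
  define F G where "F z = (x z + y z)\<^sup>2" and "G z = (p - 1) * (x z - y z)\<^sup>2" for z
  have "(\<integral>\<^sup>+ z. ennreal (\<bar>F z + G z\<bar> powr (p / 2)) \<partial>M)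
      \<le> (\<integral>\<^sup>+ z. ennreal (2 powr (p - 1) * (\<bar>x z\<bar> powr p + \<bar>y z\<bar> powr p)) \<partial>M)"
  proof (intro nn_integral_mono ennreal_leI)
    fix z
    have "2 * (F z + G z) powr (p / 2) \<le> \<bar>2 * x z\<bar> powr p + \<bar>2 * y z\<bar> powr p"
      using two_point_inequality[OF p, of "x z + y z" "x z - y z"] by (simp add: F_def G_def)
    also have "\<dots> = 2 * (2 powr (p - 1) * (\<bar>x z\<bar> powr p + \<bar>y z\<bar> powr p))"
      by (simp add: abs_mult powr_mult powr_diff algebra_simps)
    finally show "\<bar>F z + G z\<bar> powr (p / 2) \<le> 2 powr (p - 1) * (\<bar>x z\<bar> powr p + \<bar>y z\<bar> powr p)"
      using p by (simp add: F_def G_def)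
  qed
  also have "\<dots> = ennreal (2 powr (p - 1) * (X + Y))"
    using meas X Y by (simp add: nn_integral_cmult nn_integral_add ennreal_mult)
  also have "\<dots> \<le> ennreal ((2 * Q) powr p)"
    using X Y real by (intro ennreal_leI) (simp add: powr_mult powr_diff)
  also have "(2 * Q) powr p = ((2 * Q)\<^sup>2) powr (p / 2)"
    unfolding square_powr_half using real by simp
  finally have integral_bound: "(\<integral>\<^sup>+ z. ennreal (\<bar>F z + G z\<bar> powr (p / 2)) \<partial>M)
      \<le> ennreal (((2 * Q)\<^sup>2) powr (p / 2))" .
  have "(Lp_norm M p (\<lambda>z. x z + y z))\<^sup>2 + ennreal (p - 1) * (Lp_norm M p (\<lambda>z. x z - y z))\<^sup>2
      = Lp_norm M (p / 2) F + Lp_norm M (p / 2) G"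
    using p meas unfolding F_def G_def by (simp add: Lp_norm_cmult Lp_norm_square)
  also have "\<dots> \<le> Lp_norm M (p / 2) (\<lambda>z. F z + G z)"
  proof (rule Lp_norm_reverse_triangle)
    show "F \<in> borel_measurable M" "G \<in> borel_measurable M"
      unfolding F_def[abs_def] G_def[abs_def] using meas by measurable
  qed (use p in \<open>auto simp: F_def G_def\<close>)
  also have "\<dots> \<le> ennreal ((2 * Q)\<^sup>2)"
    using integral_bound p by (simp add: Lp_norm_le_ennreal_iff)
  also have "\<dots> = (2 * P)\<^sup>2"
    using real by (simp add: ennreal_power ennreal_mult)
  finally show ?thesis .
qed simp

lemma Lp_norm_le_of_GLS_norm_le_1:
  assumes "p \<in> {a<..<b}" "GLS_norm M a b \<psi> f \<le> 1" "0 < \<psi> p"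
  shows "Lp_norm M p f \<le> \<psi> p"
proof (rule ennreal_le_of_divide_le_1)
  have "Lp_norm M p f / \<psi> p \<le> GLS_norm M a b \<psi> f"
    unfolding GLS_norm_def using assms(1) by (rule SUP_upper)
  then show "Lp_norm M p f / \<psi> p \<le> 1"
    using assms(2) by order
qed (fact assms(3))

theorem theorem2p1:
  fixes M :: "'a measure" and a b :: real and \<psi> :: "real \<Rightarrow> ennreal"
    and x y :: "'a \<Rightarrow> real"
  assumes "atomless M" and "0 < emeasure M (space M)"
    and "1 < a" and "a < b" and "b \<le> 2"
    and "\<forall>p\<in>{a<..<b}. 0 < \<psi> p"
    and "0 < (INF p\<in>{a<..<b}. \<psi> p)"
    and "x \<in> GLS M a b \<psi>" and "GLS_norm M a b \<psi> x \<le> 1"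
    and "y \<in> GLS M a b \<psi>" and "GLS_norm M a b \<psi> y \<le> 1"
  shows "GLS_norm M a b \<psi> (\<lambda>z. x z + y z)
           + ennreal ((a - 1) / 4) * GLS_kappa M a b \<psi> (\<lambda>z. x z - y z) \<le> 2"
proof -
  define \<kappa> where "\<kappa> = GLS_kappa M a b \<psi> (\<lambda>z. x z - y z)"
  have per_exponent: "Lp_norm M p (\<lambda>z. x z + y z) / \<psi> p + ennreal ((a - 1) / 4) * \<kappa> \<le> 2"
    if p: "p \<in> {a<..<b}" for p
  proof -
    have "(Lp_norm M p (\<lambda>z. x z + y z))\<^sup>2 + ennreal (p - 1) * (Lp_norm M p (\<lambda>z. x z - y z))\<^sup>2
        \<le> (2 * \<psi> p)\<^sup>2"
      using p assms by (intro Lp_norm_uniform_convexity Lp_norm_le_of_GLS_norm_le_1) (auto simp: GLS_def)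
    then have "Lp_norm M p (\<lambda>z. x z + y z) / \<psi> p
        + ennreal ((p - 1) / 4) * ((Lp_norm M p (\<lambda>z. x z - y z))\<^sup>2 / (\<psi> p)\<^sup>2) \<le> 2"
      using p assms(3,6) by (intro ennreal_sum_squares_bound_imp_linear_bound) auto
    moreover have "ennreal ((a - 1) / 4) * \<kappa>
        \<le> ennreal ((p - 1) / 4) * ((Lp_norm M p (\<lambda>z. x z - y z))\<^sup>2 / (\<psi> p)\<^sup>2)"
      unfolding \<kappa>_def GLS_kappa_def using p by (intro mult_mono ennreal_leI INF_lower) auto
    ultimately show ?thesis by (meson add_left_mono order_trans)
  qed
  have "GLS_norm M a b \<psi> (\<lambda>z. x z + y z) + ennreal ((a - 1) / 4) * \<kappa>
      = (SUP p\<in>{a<..<b}. Lp_norm M p (\<lambda>z. x z + y z) / \<psi> p + ennreal ((a - 1) / 4) * \<kappa>)"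
    unfolding GLS_norm_def using assms(4) by (intro ennreal_SUP_add_left[symmetric]) auto
  also have "\<dots> \<le> 2"
    using per_exponent by (rule SUP_least)
  finally show ?thesis by (simp add: \<kappa>_def)
qed

end
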